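(* Let $\delta$ be a symbolic ultrametric on a nonempty finite set $X$. Then its graph representation $G_\delta$ is a complete edge-colored permutation graph.
   Context: For a nonempty finite set $X$ and $k\in\mathbb{N}$, a surjective map $\delta:X\times X\to\{1,\dots,k\}$ is a symbolic ultrametric if (U1) $\delta(x,y)=\delta(y,x)$ for all $x,y$; (U2) $|\{\delta(x,y),\delta(x,z),\delta(y,z)\}|\le2$ for all $x,y,z$; (U3) there is no 4-element subset $\{x,y,u,v\}$ of $X$ with $\delta(x,y)=\delta(y,u)=\delta(u,v)\ne\delta(v,y)=\delta(x,v)=\delta(x,u)$. Its graph representation $G_\delta$ is the complete graph on $X$ in which each edge $\{x,y\}$ ($x\neq y$) receives color $\delta(x,y)$. A complete edge-colored graph $G=(V,E_1,\dots,E_k)$ is a complete graph on finite $V$ with edges partitioned into nonempty color classes $E_i$; $G_{|i}=(V,E_i)$. A labeling is a bijection $\ell:V\to\{1,\dots,|V|\}$. A graph $(V,E)$ with labeling $\ell$ is a simple permutation graph of a permutation $\pi$ if for all $u,v$ with $\ell(u)>\ell(v)$: $\{u,v\}\in E$ iff $\pi^{-1}(\ell(u))<\pi^{-1}(\ell(v))$. $G$ is a complete edge-colored permutation graph if there exist a labeling $\ell$ and permutations $\pi_1,\dots,\pi_k$ with $(G_{|i},\ell)$ a simple permutation graph of $\pi_i$ for all $i$. *)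

theory Defs
  imports "HOL-Combinatorics.Permutations"
begin

definition symbolic_ultrametric :: "'a set \<Rightarrow> nat \<Rightarrow> ('a \<Rightarrow> 'a \<Rightarrow> nat) \<Rightarrow> bool" where
  "symbolic_ultrametric X k \<delta> \<longleftrightarrow>
     (\<lambda>(x,y). \<delta> x y) ` (X \<times> X) = {1..k} \<and>
     (\<forall>x\<in>X. \<forall>y\<in>X. \<delta> x y = \<delta> y x) \<and>
     (\<forall>x\<in>X. \<forall>y\<in>X. \<forall>z\<in>X. card {\<delta> x y, \<delta> x z, \<delta> y z} \<le> 2) \<and>
     \<not> (\<exists>x\<in>X. \<exists>y\<in>X. \<exists>u\<in>X. \<exists>v\<in>X. card {x,y,u,v} = 4 \<and>
          \<delta> x y = \<delta> y u \<and> \<delta> y u = \<delta> u v \<and> \<delta> u v \<noteq> \<delta> v y \<and>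
          \<delta> v y = \<delta> x v \<and> \<delta> x v = \<delta> x u)"

definition complete_edges :: "'a set \<Rightarrow> 'a set set" where
  "complete_edges V = {{u, v} | u v. u \<in> V \<and> v \<in> V \<and> u \<noteq> v}"

definition graph_rep :: "'a set \<Rightarrow> ('a \<Rightarrow> 'a \<Rightarrow> nat) \<Rightarrow> nat \<Rightarrow> 'a set set" where
  "graph_rep X \<delta> i = {{x, y} | x y. x \<in> X \<and> y \<in> X \<and> x \<noteq> y \<and> \<delta> x y = i}"

definition labeling :: "'a set \<Rightarrow> ('a \<Rightarrow> nat) \<Rightarrow> bool" where
  "labeling V lab \<longleftrightarrow> bij_betw lab V {1..card V}"

definition simple_perm_graph :: "'a set \<Rightarrow> 'a set set \<Rightarrow> ('a \<Rightarrow> nat) \<Rightarrow> (nat \<Rightarrow> nat) \<Rightarrow> bool" where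
  "simple_perm_graph V E lab \<pi> \<longleftrightarrow>
     (\<forall>u\<in>V. \<forall>v\<in>V. lab u > lab v \<longrightarrow> ({u, v} \<in> E \<longleftrightarrow> inv \<pi> (lab u) < inv \<pi> (lab v)))"

definition edge_colored_complete :: "'a set \<Rightarrow> (nat \<Rightarrow> 'a set set) \<Rightarrow> nat \<Rightarrow> bool" where
  "edge_colored_complete V E k \<longleftrightarrow> finite V \<and>
     (\<Union>i\<in>{1..k}. E i) = complete_edges V \<and>
     (\<forall>i\<in>{1..k}. \<forall>j\<in>{1..k}. i \<noteq> j \<longrightarrow> E i \<inter> E j = {})"

definition complete_edge_colored_perm_graph :: "'a set \<Rightarrow> (nat \<Rightarrow> 'a set set) \<Rightarrow> nat \<Rightarrow> bool" where
  "complete_edge_colored_perm_graph V E k \<longleftrightarrow> edge_colored_complete V E k \<and>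
     (\<exists>lab. labeling V lab \<and>
        (\<forall>i\<in>{1..k}. \<exists>\<pi>. \<pi> permutes {1..card V} \<and> simple_perm_graph V (E i) lab \<pi>))"

end

(* A symbolic ultrametric on at least two points splits X into two nonempty parts all of whose
   cross edges have one colour c. This survives adding points one at a time: either the new point
   joins one part, or it sees both parts in a second colour p, and then its c-neighbours split off
   from everything else, (U3) forbidding the two-coloured P4 that would otherwise appear.
   Listing the two parts one after the other, recursively, gives a labeling in which for
   u < v < w the edge uw has the colour of uv or of vw. So for every colour i both G_i and its
   complement are transitive along the labeling, and that makes G_i a permutation graph: keeping
   non-edges in label order and reversing edges gives a linear order of the vertices whose ranks
   are the positions inv pi_i (ell u). *)

theory Submission
  imports Defs
begin

text \<open>Conditions (U1)--(U3) without surjectivity onto the colours, so that they are inherited by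
  subsets.\<close>
definition symbolic_ultrametric_on :: "'a set \<Rightarrow> ('a \<Rightarrow> 'a \<Rightarrow> 'c) \<Rightarrow> bool" where
  "symbolic_ultrametric_on X \<delta> \<longleftrightarrow>
     (\<forall>x\<in>X. \<forall>y\<in>X. \<delta> x y = \<delta> y x) \<and>
     (\<forall>x\<in>X. \<forall>y\<in>X. \<forall>z\<in>X. \<delta> x y = \<delta> x z \<or> \<delta> x y = \<delta> y z \<or> \<delta> x z = \<delta> y z) \<and>
     (\<forall>x\<in>X. \<forall>y\<in>X. \<forall>u\<in>X. \<forall>v\<in>X. distinct [x, y, u, v] \<longrightarrow>
        \<delta> x y = \<delta> y u \<longrightarrow> \<delta> y u = \<delta> u v \<longrightarrow> \<delta> v y = \<delta> x v \<longrightarrow> \<delta> x v = \<delta> x u \<longrightarrow>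
        \<delta> u v = \<delta> v y)"

lemma symbolic_ultrametric_onD:
  assumes "symbolic_ultrametric_on X \<delta>"
  shows symbolic_ultrametric_on_sym: "\<lbrakk>x \<in> X; y \<in> X\<rbrakk> \<Longrightarrow> \<delta> x y = \<delta> y x"
    and symbolic_ultrametric_on_triangle: "\<lbrakk>x \<in> X; y \<in> X; z \<in> X\<rbrakk> \<Longrightarrow>
          \<delta> x y = \<delta> x z \<or> \<delta> x y = \<delta> y z \<or> \<delta> x z = \<delta> y z"
    and symbolic_ultrametric_on_no_P4: "\<lbrakk>x \<in> X; y \<in> X; u \<in> X; v \<in> X; distinct [x, y, u, v];
          \<delta> x y = \<delta> y u; \<delta> y u = \<delta> u v; \<delta> v y = \<delta> x v; \<delta> x v = \<delta> x u\<rbrakk> \<Longrightarrow> \<delta> u v = \<delta> v y"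
  using assms unfolding symbolic_ultrametric_on_def by blast+

lemma symbolic_ultrametric_on_subset:
  "symbolic_ultrametric_on X \<delta> \<Longrightarrow> Y \<subseteq> X \<Longrightarrow> symbolic_ultrametric_on Y \<delta>"
  unfolding symbolic_ultrametric_on_def by blast

lemma symbolic_ultrametric_imp_on:
  assumes "symbolic_ultrametric X k \<delta>"
  shows "symbolic_ultrametric_on X \<delta>"
proof -
  have "a = b \<or> a = c \<or> b = c" if "card {a, b, c :: nat} \<le> 2" for a b c
    using that by (cases "a = b"; cases "a = c"; cases "b = c") auto
  moreover have "card {x, y, u, v} = 4" if "distinct [x, y, u, v :: 'a]" for x y u v
    using that by simp
  ultimately show ?thesis
    using assms unfolding symbolic_ultrametric_def symbolic_ultrametric_on_def by (smt (verit))
qed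

lemma symbolic_ultrametric_on_P4_colour:
  assumes su: "symbolic_ultrametric_on X \<delta>"
    and in_X: "w \<in> X" "x \<in> X" "s \<in> X" "t \<in> X" and dist: "distinct [w, x, t, s]"
    and p: "\<delta> w x = p" "\<delta> x t = p" and c: "\<delta> x s = c" "\<delta> w s = c" "\<delta> w t = c"
    and "p \<noteq> c"
  shows "\<delta> s t = c"
proof (rule ccontr)
  assume "\<delta> s t \<noteq> c"
  moreover have "\<delta> s t = \<delta> s x \<or> \<delta> s t = \<delta> t x \<or> \<delta> s x = \<delta> t x"
    using symbolic_ultrametric_on_triangle[OF su] in_X by blast
  ultimately have "\<delta> t s = p"
    using symbolic_ultrametric_on_sym[OF su] in_X p c \<open>p \<noteq> c\<close> by metis
  then have "\<delta> t s = \<delta> s x"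
    using symbolic_ultrametric_on_no_P4[OF su, of w x t s] symbolic_ultrametric_on_sym[OF su]
      in_X dist p c by metis
  then show False
    using \<open>\<delta> t s = p\<close> c \<open>p \<noteq> c\<close> symbolic_ultrametric_on_sym[OF su] in_X by metis
qed

definition monochromatic_split :: "'a set \<Rightarrow> ('a \<Rightarrow> 'a \<Rightarrow> 'c) \<Rightarrow> 'a set \<Rightarrow> 'a set \<Rightarrow> bool" where
  "monochromatic_split X \<delta> A B \<longleftrightarrow> A \<noteq> {} \<and> B \<noteq> {} \<and> A \<inter> B = {} \<and> A \<union> B = X \<and>
     (\<exists>c. \<forall>a\<in>A. \<forall>b\<in>B. \<delta> a b = c)"

lemma monochromatic_split_insert_cross_colour:
  assumes su: "symbolic_ultrametric_on (insert x F) \<delta>" and "x \<notin> F"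
    and AB: "A \<inter> B = {}" "A \<union> B = F" "\<forall>a\<in>A. \<forall>b\<in>B. \<delta> a b = c"
    and a: "a \<in> A" "\<delta> x a = p" and b: "b \<in> B" "\<delta> x b = p" and "p \<noteq> c"
    and s: "s \<in> F" "\<delta> x s = c" and t: "t \<in> F" "\<delta> x t = p"
  shows "\<delta> s t = c"
proof -
  note sym = symbolic_ultrametric_on_sym[OF su]
  have "s \<noteq> t" using s t \<open>p \<noteq> c\<close> by auto
  \<comment> \<open>On the same side, s and t form a two-coloured P4 with x and a vertex of the other side.\<close>
  consider "s \<in> A" "t \<in> A" | "s \<in> B" "t \<in> B" | "s \<in> A" "t \<in> B" | "s \<in> B" "t \<in> A"
    using s t AB by blast
  then show ?thesis
  proof cases
    case 1
    have "\<delta> b x = p" "\<delta> b s = c" "\<delta> b t = c"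
      using b sym[of b x] sym[of s b] sym[of t b] 1 AB by auto
    moreover have "distinct [b, x, t, s]" using b 1 AB \<open>s \<noteq> t\<close> \<open>x \<notin> F\<close> by auto
    ultimately show ?thesis
      using symbolic_ultrametric_on_P4_colour[OF su, of b x s t p c] b s t AB \<open>p \<noteq> c\<close> by blast
  next
    case 2
    have "\<delta> a x = p" "\<delta> a s = c" "\<delta> a t = c"
      using a sym[of a x] 2 AB by auto
    moreover have "distinct [a, x, t, s]" using a 2 AB \<open>s \<noteq> t\<close> \<open>x \<notin> F\<close> by auto
    ultimately show ?thesis
      using symbolic_ultrametric_on_P4_colour[OF su, of a x s t p c] a s t AB \<open>p \<noteq> c\<close> by blast
  qed (use AB sym[of s t] s t in auto)
qed

lemma monochromatic_split_insert_mixed: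
  assumes su: "symbolic_ultrametric_on (insert x F) \<delta>" and "x \<notin> F"
    and AB: "A \<inter> B = {}" "A \<union> B = F" "\<forall>a\<in>A. \<forall>b\<in>B. \<delta> a b = c"
    and a: "a \<in> A" "\<delta> x a \<noteq> c" and b: "b \<in> B" "\<delta> x b \<noteq> c"
  shows "\<exists>A' B'. monochromatic_split (insert x F) \<delta> A' B'"
proof -
  define p where "p = \<delta> x a"
  note sym = symbolic_ultrametric_on_sym[OF su] and triangle = symbolic_ultrametric_on_triangle[OF su]
  have "p \<noteq> c" using a p_def by simp
  have xb: "\<delta> x b = p"
    using triangle[of x a b] a b AB unfolding p_def by auto
  have x_colours: "\<delta> x y = p \<or> \<delta> x y = c" if "y \<in> F" for y
  proof (cases "y \<in> A")
    case True
    then show ?thesis using triangle[of x b y] sym[of b y] b AB xb that by auto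
  next
    case False
    then show ?thesis using triangle[of x a y] sym[of a y] a AB that unfolding p_def by auto
  qed
  define S where "S = {y\<in>F. \<delta> x y = c}"
  show ?thesis
  proof (cases "S = {}")
    case True
    then have "monochromatic_split (insert x F) \<delta> {x} F"
      unfolding monochromatic_split_def S_def using x_colours a AB \<open>x \<notin> F\<close> by auto
    then show ?thesis by blast
  next
    case False
    have "\<delta> s t = c" if "s \<in> S" "t \<in> F - S" for s t
      using monochromatic_split_insert_cross_colour[OF su \<open>x \<notin> F\<close> AB a(1) p_def[symmetric] b(1) xb
          \<open>p \<noteq> c\<close>] that x_colours unfolding S_def by blast
    moreover have "\<delta> s x = c" if "s \<in> S" for s
      using that sym[of s x] unfolding S_def by auto
    ultimately have "monochromatic_split (insert x F) \<delta> S (insert x (F - S))"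
      unfolding monochromatic_split_def using False \<open>x \<notin> F\<close> S_def by blast
    then show ?thesis by blast
  qed
qed

lemma monochromatic_split_insert:
  assumes su: "symbolic_ultrametric_on (insert x F) \<delta>" and "x \<notin> F"
    and "monochromatic_split F \<delta> A B"
  shows "\<exists>A' B'. monochromatic_split (insert x F) \<delta> A' B'"
proof -
  obtain c where AB: "A \<noteq> {}" "B \<noteq> {}" "A \<inter> B = {}" "A \<union> B = F" "\<forall>a\<in>A. \<forall>b\<in>B. \<delta> a b = c"
    using assms(3) unfolding monochromatic_split_def by blast
  have sym: "\<delta> y x = \<delta> x y" if "y \<in> F" for y
    using symbolic_ultrametric_on_sym[OF su] that by blast
  consider "\<forall>a\<in>A. \<delta> x a = c" | "\<forall>b\<in>B. \<delta> x b = c"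
    | a b where "a \<in> A" "\<delta> x a \<noteq> c" "b \<in> B" "\<delta> x b \<noteq> c"
    by blast
  then show ?thesis
  proof cases
    case 1
    then have "monochromatic_split (insert x F) \<delta> A (insert x B)"
      unfolding monochromatic_split_def using AB sym \<open>x \<notin> F\<close> by auto
    then show ?thesis by blast
  next
    case 2
    then have "monochromatic_split (insert x F) \<delta> (insert x A) B"
      unfolding monochromatic_split_def using AB \<open>x \<notin> F\<close> by auto
    then show ?thesis by blast
  next
    case 3
    then show ?thesis using monochromatic_split_insert_mixed[OF su \<open>x \<notin> F\<close>] AB by blast
  qed
qed

lemma monochromatic_split_exists:
  assumes "finite X" "symbolic_ultrametric_on X \<delta>" "2 \<le> card X"
  shows "\<exists>A B. monochromatic_split X \<delta> A B"
  using assms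
proof (induction X rule: finite_induct)
  case empty
  then show ?case by simp
next
  case (insert x F)
  show ?case
  proof (cases "2 \<le> card F")
    case True
    then show ?thesis
      using insert symbolic_ultrametric_on_subset[OF insert.prems(1)] monochromatic_split_insert
      by (meson subset_insertI)
  next
    case False
    then have "card F = 1" using insert by simp
    then obtain y where "F = {y}" by (auto simp: card_Suc_eq)
    then have "monochromatic_split (insert x F) \<delta> {x} {y}"
      unfolding monochromatic_split_def using insert.hyps by auto
    then show ?thesis by blast
  qed
qed

text \<open>For every colour i, both the colour class i and its complement are transitive along such
  a labeling.\<close>
definition transitive_labeling :: "'a set \<Rightarrow> ('a \<Rightarrow> 'a \<Rightarrow> 'c) \<Rightarrow> ('a \<Rightarrow> nat) \<Rightarrow> bool" where
  "transitive_labeling X \<delta> lab \<longleftrightarrow> bij_betw lab X {1..card X} \<and>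
     (\<forall>u\<in>X. \<forall>v\<in>X. \<forall>w\<in>X. lab u < lab v \<longrightarrow> lab v < lab w \<longrightarrow> \<delta> u w = \<delta> u v \<or> \<delta> u w = \<delta> v w)"

lemma bij_betw_concat_labelings:
  assumes la: "bij_betw la A {1..card A}" and lb: "bij_betw lb B {1..card B}"
    and "A \<inter> B = {}" "finite A" "finite B"
  shows "bij_betw (\<lambda>x. if x \<in> A then la x else card A + lb x) (A \<union> B) {1..card (A \<union> B)}"
proof -
  let ?lab = "\<lambda>x. if x \<in> A then la x else card A + lb x"
  have "bij_betw ?lab A {1..card A}"
    using la by (rule bij_betw_cong[THEN iffD1, rotated]) simp
  moreover have "bij_betw ((+) (card A) \<circ> lb) B {card A + 1..card A + card B}"
    by (rule bij_betw_trans[OF lb]) (simp add: bij_betw_def add.commute)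
  then have "bij_betw ?lab B {card A + 1..card A + card B}"
    by (rule bij_betw_cong[THEN iffD1, rotated]) (use \<open>A \<inter> B = {}\<close> in auto)
  ultimately have "bij_betw ?lab (A \<union> B) ({1..card A} \<union> {card A + 1..card A + card B})"
    by (rule bij_betw_combine) auto
  moreover have "{1..card A} \<union> {card A + 1..card A + card B} = {1..card (A \<union> B)}"
    using assms(3-5) by (auto simp: card_Un_disjoint)
  ultimately show ?thesis by simp
qed

lemma transitive_labeling_concat:
  assumes "A \<inter> B = {}" "finite A" "finite B" and c: "\<forall>a\<in>A. \<forall>b\<in>B. \<delta> a b = c"
    and la: "transitive_labeling A \<delta> la" and lb: "transitive_labeling B \<delta> lb"
  shows "transitive_labeling (A \<union> B) \<delta> (\<lambda>x. if x \<in> A then la x else card A + lb x)"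
    (is "transitive_labeling _ _ ?lab")
proof -
  have "la a \<le> card A" if "a \<in> A" for a
    using la that by (auto simp: transitive_labeling_def bij_betw_def)
  moreover have "1 \<le> lb b" if "b \<in> B" for b
    using lb that by (auto simp: transitive_labeling_def bij_betw_def)
  ultimately have A_first: "?lab a < ?lab b" if "a \<in> A" "b \<in> B" for a b
    using that \<open>A \<inter> B = {}\<close> by fastforce
  have B_closed: "y \<in> B" if "x \<in> B" "y \<in> A \<union> B" "?lab x < ?lab y" for x y
    using that A_first[of y x] by auto
  have A_closed: "y \<in> A" if "x \<in> A" "y \<in> A \<union> B" "?lab y < ?lab x" for x y
    using that A_first[of x y] by auto
  have "\<delta> u w = \<delta> u v \<or> \<delta> u w = \<delta> v w"
    if uvw: "u \<in> A \<union> B" "v \<in> A \<union> B" "w \<in> A \<union> B" "?lab u < ?lab v" "?lab v < ?lab w"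
    for u v w
  proof -
    consider "u \<in> A" "v \<in> A" "w \<in> A" | "u \<in> B" "v \<in> B" "w \<in> B" | "u \<in> A" "w \<in> B"
      using uvw B_closed[of u v] B_closed[of v w] A_closed[of w v] A_closed[of v u] by blast
    then show ?thesis
    proof cases
      case 1
      then show ?thesis using la uvw by (simp add: transitive_labeling_def)
    next
      case 2
      then have "u \<notin> A" "v \<notin> A" "w \<notin> A" using \<open>A \<inter> B = {}\<close> by auto
      then have "lb u < lb v" "lb v < lb w" using uvw(4,5) by auto
      then show ?thesis using lb 2 by (simp add: transitive_labeling_def)
    next
      case 3
      then show ?thesis using c uvw(2) by auto
    qed
  qed
  moreover have "bij_betw ?lab (A \<union> B) {1..card (A \<union> B)}"
    using bij_betw_concat_labelings assms la lb unfolding transitive_labeling_def by blast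
  ultimately show ?thesis
    unfolding transitive_labeling_def by blast
qed

lemma transitive_labeling_exists:
  assumes "finite X" "symbolic_ultrametric_on X \<delta>"
  shows "\<exists>lab. transitive_labeling X \<delta> lab"
  using assms
proof (induction "card X" arbitrary: X rule: less_induct)
  case less
  show ?case
  proof (cases "2 \<le> card X")
    case True
    then obtain A B c where AB: "A \<noteq> {}" "B \<noteq> {}" "A \<inter> B = {}" "A \<union> B = X"
      "\<forall>a\<in>A. \<forall>b\<in>B. \<delta> a b = c"
      using monochromatic_split_exists[OF less.prems] unfolding monochromatic_split_def by blast
    have "finite A" "finite B" using AB less.prems by auto
    then have "card A < card X" "card B < card X"
      using AB by (auto simp: card_Un_disjoint)
    moreover have "symbolic_ultrametric_on A \<delta>" "symbolic_ultrametric_on B \<delta>"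
      using symbolic_ultrametric_on_subset[OF less.prems(2)] AB(4) by auto
    ultimately obtain la lb where "transitive_labeling A \<delta> la" "transitive_labeling B \<delta> lb"
      using less.hyps \<open>finite A\<close> \<open>finite B\<close> by meson
    then show ?thesis
      using transitive_labeling_concat[OF AB(3) \<open>finite A\<close> \<open>finite B\<close> AB(5)] AB(4) by blast
  next
    case False
    then have "card X = 0 \<or> card X = 1" by linarith
    then consider "X = {}" | y where "X = {y}"
      using less.prems(1) card_1_singletonE by auto
    then have "transitive_labeling X \<delta> (\<lambda>_. 1)"
      by cases (auto simp: transitive_labeling_def bij_betw_def)
    then show ?thesis by blast
  qed
qed

lemma rank_bij_betw:
  assumes fin: "finite X"
    and trans: "\<And>u v w. \<lbrakk>u \<in> X; v \<in> X; w \<in> X; R u v; R v w\<rbrakk> \<Longrightarrow> R u w"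
    and irrefl: "\<And>u. u \<in> X \<Longrightarrow> \<not> R u u"
    and total: "\<And>u v. \<lbrakk>u \<in> X; v \<in> X; u \<noteq> v\<rbrakk> \<Longrightarrow> R u v \<or> R v u"
  defines "rank \<equiv> \<lambda>u. card {w\<in>X. R w u} + 1"
  shows rank_less_iff: "\<And>u v. \<lbrakk>u \<in> X; v \<in> X\<rbrakk> \<Longrightarrow> rank u < rank v \<longleftrightarrow> R u v"
    and "bij_betw rank X {1..card X}"
proof -
  have less: "rank u < rank v" if "u \<in> X" "v \<in> X" "R u v" for u v
  proof -
    have "{w\<in>X. R w u} \<subset> {w\<in>X. R w v}"
      using that trans irrefl by blast
    then show ?thesis
      unfolding rank_def using fin by (simp add: psubset_card_mono)
  qed
  show "rank u < rank v \<longleftrightarrow> R u v" if "u \<in> X" "v \<in> X" for u v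
    using less[of u v] less[of v u] total[of u v] that by fastforce
  have inj: "inj_on rank X"
  proof (rule inj_onI)
    fix u v assume "u \<in> X" "v \<in> X" "rank u = rank v"
    then show "u = v" using less[of u v] less[of v u] total[of u v] by auto
  qed
  have "rank u \<in> {1..card X}" if "u \<in> X" for u
  proof -
    have "{w\<in>X. R w u} \<subset> X" using irrefl that by auto
    then have "card {w\<in>X. R w u} < card X"
      using fin by (rule psubset_card_mono[rotated])
    then show ?thesis unfolding rank_def by simp
  qed
  then have "rank ` X = {1..card X}"
    using inj by (intro card_subset_eq) (auto simp: card_image)
  then show "bij_betw rank X {1..card X}"
    using inj by (simp add: bij_betw_def)
qed

text \<open>Non-edges keep the order of the labeling and edges reverse it: this is the order of the
  vertices in the second row of the permutation diagram.\<close>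
definition perm_graph_order :: "('a \<Rightarrow> nat) \<Rightarrow> 'a set set \<Rightarrow> 'a \<Rightarrow> 'a \<Rightarrow> bool" where
  "perm_graph_order lab E u v \<longleftrightarrow> (lab u < lab v \<and> {u, v} \<notin> E) \<or> (lab v < lab u \<and> {u, v} \<in> E)"

lemma perm_graph_order_trans:
  assumes inj: "inj_on lab V"
    and E_trans: "\<And>u v w. \<lbrakk>u \<in> V; v \<in> V; w \<in> V; lab u < lab v; lab v < lab w;
        {u, v} \<in> E; {v, w} \<in> E\<rbrakk> \<Longrightarrow> {u, w} \<in> E"
    and non_E_trans: "\<And>u v w. \<lbrakk>u \<in> V; v \<in> V; w \<in> V; lab u < lab v; lab v < lab w;
        {u, v} \<notin> E; {v, w} \<notin> E\<rbrakk> \<Longrightarrow> {u, w} \<notin> E"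
    and uvw: "u \<in> V" "v \<in> V" "w \<in> V"
    and R: "perm_graph_order lab E u v" "perm_graph_order lab E v w"
  shows "perm_graph_order lab E u w"
proof -
  note R_def = perm_graph_order_def
  have "u \<noteq> w" using R unfolding R_def by (auto simp: insert_commute)
  then have "lab u \<noteq> lab w" using inj_onD[OF inj] uvw by blast
  moreover have "lab u \<noteq> lab v" "lab v \<noteq> lab w" using R unfolding R_def by auto
  ultimately consider "lab u < lab v" "lab v < lab w" | "lab u < lab w" "lab w < lab v"
    | "lab w < lab u" "lab u < lab v" | "lab v < lab u" "lab u < lab w"
    | "lab v < lab w" "lab w < lab u" | "lab w < lab v" "lab v < lab u"
    by (elim linorder_neqE_nat) auto
  moreover have swap: "{v, u} = {u, v}" "{w, u} = {u, w}" "{w, v} = {v, w}"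
    by auto
  ultimately show ?thesis
  proof cases
    case 1
    then show ?thesis using R uvw non_E_trans[of u v w] unfolding R_def by auto
  next
    case 2
    then show ?thesis using R uvw E_trans[of u w v] unfolding R_def swap by auto
  next
    case 3
    then show ?thesis using R uvw non_E_trans[of w u v] unfolding R_def swap by auto
  next
    case 4
    then show ?thesis using R uvw E_trans[of v u w] unfolding R_def swap by auto
  next
    case 5
    then show ?thesis using R uvw non_E_trans[of v w u] unfolding R_def swap by auto
  next
    case 6
    then show ?thesis using R uvw E_trans[of w v u] unfolding R_def swap by auto
  qed
qed

lemma perm_graph_order_total:
  assumes "inj_on lab V" "u \<in> V" "v \<in> V" "u \<noteq> v"
  shows "perm_graph_order lab E u v \<or> perm_graph_order lab E v u"
proof -
  have "lab u \<noteq> lab v" using inj_onD[OF assms(1)] assms(2-4) by blast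
  then show ?thesis unfolding perm_graph_order_def by (auto simp: insert_commute)
qed

lemma simple_perm_graph_if_transitive:
  assumes "finite V" and lab: "bij_betw lab V {1..card V}"
    and E_trans: "\<And>u v w. \<lbrakk>u \<in> V; v \<in> V; w \<in> V; lab u < lab v; lab v < lab w;
        {u, v} \<in> E; {v, w} \<in> E\<rbrakk> \<Longrightarrow> {u, w} \<in> E"
    and non_E_trans: "\<And>u v w. \<lbrakk>u \<in> V; v \<in> V; w \<in> V; lab u < lab v; lab v < lab w;
        {u, v} \<notin> E; {v, w} \<notin> E\<rbrakk> \<Longrightarrow> {u, w} \<notin> E"
  shows "\<exists>\<pi>. \<pi> permutes {1..card V} \<and> simple_perm_graph V E lab \<pi>"
proof -
  let ?R = "perm_graph_order lab E"
  have inj: "inj_on lab V" using lab by (rule bij_betw_imp_inj_on)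
  note R_trans = perm_graph_order_trans[OF inj E_trans non_E_trans]
    and R_total = perm_graph_order_total[OF inj]
  have R_irrefl: "\<not> ?R u u" for u
    unfolding perm_graph_order_def by simp
  define rank where "rank u = card {w\<in>V. ?R w u} + 1" for u
  have rank_less: "rank u < rank v \<longleftrightarrow> ?R u v" if "u \<in> V" "v \<in> V" for u v
    unfolding rank_def using rank_less_iff[OF \<open>finite V\<close> R_trans R_irrefl R_total] that by simp
  have "bij_betw rank V {1..card V}"
    unfolding rank_def using rank_bij_betw(2)[OF \<open>finite V\<close> R_trans R_irrefl R_total] by simp
  then have "bij_betw (rank \<circ> inv_into V lab) {1..card V} {1..card V}"
    using bij_betw_inv_into[OF lab] bij_betw_trans by blast
  define \<sigma> where "\<sigma> m = (if m \<in> {1..card V} then rank (inv_into V lab m) else m)" for m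
  have "bij_betw \<sigma> {1..card V} {1..card V}"
    using \<open>bij_betw (rank \<circ> inv_into V lab) _ _\<close>
    by (rule bij_betw_cong[THEN iffD1, rotated]) (simp add: \<sigma>_def)
  then have \<sigma>: "\<sigma> permutes {1..card V}"
    by (rule bij_imp_permutes) (auto simp: \<sigma>_def)
  have \<sigma>_lab: "\<sigma> (lab u) = rank u" if "u \<in> V" for u
    using that bij_betwE[OF lab] inv_into_f_f[OF inj] unfolding \<sigma>_def by auto
  have "simple_perm_graph V E lab (inv \<sigma>)"
    unfolding simple_perm_graph_def inv_inv_eq[OF permutes_bij[OF \<sigma>]]
  proof (intro ballI impI)
    fix u v assume "u \<in> V" "v \<in> V" "lab v < lab u"
    then show "{u, v} \<in> E \<longleftrightarrow> \<sigma> (lab u) < \<sigma> (lab v)"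
      using \<sigma>_lab rank_less[of u v] unfolding perm_graph_order_def by auto
  qed
  then show ?thesis
    using permutes_inv[OF \<sigma>] by blast
qed

lemma graph_rep_iff:
  assumes "\<forall>x\<in>X. \<forall>y\<in>X. \<delta> x y = \<delta> y x" "u \<in> X" "v \<in> X" "u \<noteq> v"
  shows "{u, v} \<in> graph_rep X \<delta> i \<longleftrightarrow> \<delta> u v = i"
  using assms unfolding graph_rep_def by (auto simp: doubleton_eq_iff)

lemma edge_colored_complete_graph_rep:
  assumes "finite X" "\<forall>x\<in>X. \<forall>y\<in>X. \<delta> x y = \<delta> y x"
    and "\<And>x y. \<lbrakk>x \<in> X; y \<in> X\<rbrakk> \<Longrightarrow> \<delta> x y \<in> {1..k}"
  shows "edge_colored_complete X (graph_rep X \<delta>) k"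
proof -
  have "(\<Union>i\<in>{1..k}. graph_rep X \<delta> i) = complete_edges X"
    unfolding complete_edges_def graph_rep_def using assms(3) by blast
  moreover have "graph_rep X \<delta> i \<inter> graph_rep X \<delta> j = {}" if "i \<noteq> j" for i j
    using that graph_rep_iff[OF assms(2)] unfolding graph_rep_def by fastforce
  ultimately show ?thesis
    unfolding edge_colored_complete_def using \<open>finite X\<close> by blast
qed

lemma simple_perm_graph_graph_rep:
  assumes "finite X" and sym: "\<forall>x\<in>X. \<forall>y\<in>X. \<delta> x y = \<delta> y x"
    and lab: "transitive_labeling X \<delta> lab"
  shows "\<exists>\<pi>. \<pi> permutes {1..card X} \<and> simple_perm_graph X (graph_rep X \<delta> i) lab \<pi>"
proof (rule simple_perm_graph_if_transitive[OF \<open>finite X\<close>])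
  show bij: "bij_betw lab X {1..card X}"
    using lab unfolding transitive_labeling_def by blast
  have "u \<noteq> v" if "lab u < lab v" for u v
    using that by blast
  then have iff: "{u, v} \<in> graph_rep X \<delta> i \<longleftrightarrow> \<delta> u v = i"
    if "u \<in> X" "v \<in> X" "lab u < lab v" for u v
    using graph_rep_iff[OF sym] that by blast
  have outer: "\<delta> u w = \<delta> u v \<or> \<delta> u w = \<delta> v w"
    if "u \<in> X" "v \<in> X" "w \<in> X" "lab u < lab v" "lab v < lab w" for u v w
    using lab that unfolding transitive_labeling_def by blast
  show "{u, w} \<in> graph_rep X \<delta> i"
    if "u \<in> X" "v \<in> X" "w \<in> X" "lab u < lab v" "lab v < lab w"
      "{u, v} \<in> graph_rep X \<delta> i" "{v, w} \<in> graph_rep X \<delta> i" for u v w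
    using that iff[of u v] iff[of v w] iff[of u w] outer[of u v w] by auto
  show "{u, w} \<notin> graph_rep X \<delta> i"
    if "u \<in> X" "v \<in> X" "w \<in> X" "lab u < lab v" "lab v < lab w"
      "{u, v} \<notin> graph_rep X \<delta> i" "{v, w} \<notin> graph_rep X \<delta> i" for u v w
    using that iff[of u v] iff[of v w] iff[of u w] outer[of u v w] by auto
qed

theorem corollary6p4:
  fixes X :: "'a set" and k :: nat and \<delta> :: "'a \<Rightarrow> 'a \<Rightarrow> nat"
  assumes "finite X" and "X \<noteq> {}" and "symbolic_ultrametric X k \<delta>"
  shows "complete_edge_colored_perm_graph X (graph_rep X \<delta>) k"
proof -
  have su: "symbolic_ultrametric_on X \<delta>"
    using symbolic_ultrametric_imp_on[OF assms(3)] .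
  have sym: "\<forall>x\<in>X. \<forall>y\<in>X. \<delta> x y = \<delta> y x"
    using symbolic_ultrametric_on_sym[OF su] by blast
  have "(\<lambda>(x, y). \<delta> x y) ` (X \<times> X) = {1..k}"
    using assms(3) unfolding symbolic_ultrametric_def by (rule conjunct1)
  then have "\<delta> x y \<in> {1..k}" if "x \<in> X" "y \<in> X" for x y
    using that by blast
  then have "edge_colored_complete X (graph_rep X \<delta>) k"
    using edge_colored_complete_graph_rep[OF assms(1) sym] by blast
  moreover obtain lab where lab: "transitive_labeling X \<delta> lab"
    using transitive_labeling_exists[OF assms(1) su] by blast
  moreover have "labeling X lab"
    using lab unfolding labeling_def transitive_labeling_def by blast
  ultimately show ?thesis
    unfolding complete_edge_colored_perm_graph_def
    using simple_perm_graph_graph_rep[OF assms(1) sym lab] by blast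
qed

end
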